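(* Let $b\in\mathbb R$, $\omega>0$, $\mathcal B>0$, $t\ge0$, and let $\varphi(t,x,y,\eta)$ be the phase function described in the context. Then the set of solutions $(x,y,\eta)$ (with $y\ne0$, $y\wedge\eta\ne b$) of the equation $\varphi_\eta(t,x,y,\eta)=0$ is contained in the set $$\Big\{(x,y,\eta):\ x\wedge y=-\frac{\sin(\omega t)}{\omega}\,(y\wedge\eta-b)\Big\}.$$
   Context: $A(x)=\big(-b\,x_2/|x|^2,\ b\,x_1/|x|^2\big)$ for $x\ne0$; $u\wedge v=u_1v_2-u_2v_1$. The Hamiltonian is $h(x,\xi)=\frac12|\xi-A(x)|^2+\frac{\omega^2}{2}|x|^2$; for $y\ne0$, $y\wedge\eta\neq b$, $(x^t,\xi^t)=(x^t(y,\eta),\xi^t(y,\eta))$ solves $\dot x^t=\xi^t-A(x^t)$, $\dot\xi^t=-h_x(x^t,\xi^t)$, $x^0=y$, $\xi^0=\eta$. The action is $S(t,y,\eta)=\int_0^t\big(h_\xi(x^s,\xi^s)\cdot\xi^s-h(x^s,\xi^s)\big)ds$, and $\varphi(t,x,y,\eta)=S(t,y,\eta)+(x-x^t)\cdot\xi^t+i\mathcal B|x-x^t|^2/2$. $\varphi_\eta$ is the gradient in $\eta$. *)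

theory Defs
  imports "HOL-Analysis.Analysis"
begin

type_synonym vec2 = "real \<times> real"

definition wedge :: "vec2 \<Rightarrow> vec2 \<Rightarrow> real" where
  "wedge u v = fst u * snd v - snd u * fst v"

definition Apot :: "real \<Rightarrow> vec2 \<Rightarrow> vec2" where
  "Apot b x = (- b * snd x / (norm x)^2, b * fst x / (norm x)^2)"

definition ham :: "real \<Rightarrow> real \<Rightarrow> vec2 \<Rightarrow> vec2 \<Rightarrow> real" where
  "ham b \<omega> x \<xi> = (norm (\<xi> - Apot b x))^2 / 2 + \<omega>^2 / 2 * (norm x)^2"

text \<open>X t y eta, Xi t y eta is the Hamiltonian flow starting at (y,eta), for every
admissible initial datum (y \<noteq> 0, y \<and> eta \<noteq> b), for all times s \<ge> 0:
x' = xi - A(x), xi' = - h_x(x,xi), where h_x is the gradient of h in x.\<close>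
definition is_flow ::
  "real \<Rightarrow> real \<Rightarrow> (real \<Rightarrow> vec2 \<Rightarrow> vec2 \<Rightarrow> vec2) \<Rightarrow> (real \<Rightarrow> vec2 \<Rightarrow> vec2 \<Rightarrow> vec2) \<Rightarrow> bool" where
  "is_flow b \<omega> X \<Xi> \<longleftrightarrow>
     (\<forall>y \<eta>. y \<noteq> 0 \<and> wedge y \<eta> \<noteq> b \<longrightarrow>
        X 0 y \<eta> = y \<and> \<Xi> 0 y \<eta> = \<eta> \<and>
        (\<forall>s\<ge>0. X s y \<eta> \<noteq> 0 \<and>
           ((\<lambda>r. X r y \<eta>) has_vector_derivative (\<Xi> s y \<eta> - Apot b (X s y \<eta>))) (at s within {0..}) \<and>
           (\<exists>v. ((\<lambda>r. \<Xi> r y \<eta>) has_vector_derivative v) (at s within {0..}) \<and>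
                ((\<lambda>z. ham b \<omega> z (\<Xi> s y \<eta>)) has_derivative (\<lambda>w. - (v \<bullet> w))) (at (X s y \<eta>)))))"

text \<open>Action S(t,y,eta) = int_0^t (h_xi . xi - h) ds, with h_xi(x,xi) = xi - A(x).\<close>
definition action ::
  "real \<Rightarrow> real \<Rightarrow> (real \<Rightarrow> vec2 \<Rightarrow> vec2 \<Rightarrow> vec2) \<Rightarrow> (real \<Rightarrow> vec2 \<Rightarrow> vec2 \<Rightarrow> vec2) \<Rightarrow>
   real \<Rightarrow> vec2 \<Rightarrow> vec2 \<Rightarrow> real" where
  "action b \<omega> X \<Xi> t y \<eta> =
     integral {0..t} (\<lambda>s. (\<Xi> s y \<eta> - Apot b (X s y \<eta>)) \<bullet> \<Xi> s y \<eta> - ham b \<omega> (X s y \<eta>) (\<Xi> s y \<eta>))"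

definition phase ::
  "real \<Rightarrow> real \<Rightarrow> real \<Rightarrow> (real \<Rightarrow> vec2 \<Rightarrow> vec2 \<Rightarrow> vec2) \<Rightarrow> (real \<Rightarrow> vec2 \<Rightarrow> vec2 \<Rightarrow> vec2) \<Rightarrow>
   real \<Rightarrow> vec2 \<Rightarrow> vec2 \<Rightarrow> vec2 \<Rightarrow> complex" where
  "phase b \<omega> B X \<Xi> t x y \<eta> =
     complex_of_real (action b \<omega> X \<Xi> t y \<eta> + (x - X t y \<eta>) \<bullet> \<Xi> t y \<eta>)
     + \<i> * complex_of_real (B * (norm (x - X t y \<eta>))^2 / 2)"

definition phase_eta_zero ::
  "real \<Rightarrow> real \<Rightarrow> real \<Rightarrow> (real \<Rightarrow> vec2 \<Rightarrow> vec2 \<Rightarrow> vec2) \<Rightarrow> (real \<Rightarrow> vec2 \<Rightarrow> vec2 \<Rightarrow> vec2) \<Rightarrow>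
   real \<Rightarrow> vec2 \<Rightarrow> vec2 \<Rightarrow> vec2 \<Rightarrow> bool" where
  "phase_eta_zero b \<omega> B X \<Xi> t x y \<eta> \<longleftrightarrow>
     ((\<lambda>s. phase b \<omega> B X \<Xi> t x y (\<eta> + (s, 0))) has_vector_derivative 0) (at 0) \<and>
     ((\<lambda>s. phase b \<omega> B X \<Xi> t x y (\<eta> + (0, s))) has_vector_derivative 0) (at 0)"

end

theory Submission
  imports Defs
begin

text \<open>
  Away from the origin the potential \<open>A\<close> is curl free, i.e. its Jacobian is symmetric.
  Hence along the flow the kinetic momentum \<open>p = \<xi> - A(x)\<close> obeys \<open>x' = p\<close>,
  \<open>p' = -\<omega>\<^sup>2 x\<close>, and the trajectory is the free harmonic one,
  \<open>x\<^sup>t = cos(\<omega>t) y + sin(\<omega>t)/\<omega> (\<eta> - A(y))\<close>.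
  The imaginary part of \<open>\<phi>\<close> is \<open>\<B>|x - x\<^sup>t|\<^sup>2/2\<close>, and since \<open>\<partial>x\<^sup>t/\<partial>\<eta> = sin(\<omega>t)/\<omega>\<close>
  its \<open>\<eta>\<close>-gradient vanishes only if \<open>sin(\<omega>t) (x - x\<^sup>t) = 0\<close>. When \<open>sin(\<omega>t) \<noteq> 0\<close>
  this gives \<open>x = x\<^sup>t\<close>, and \<open>x\<^sup>t \<and> y\<close> is the claimed value because \<open>y \<and> A(y) = b\<close>.
  When \<open>sin(\<omega>t) = 0\<close> we have \<open>x\<^sup>t = \<plusminus>y\<close>, \<open>\<xi>\<^sup>t = \<plusminus>\<eta>\<close>, and the action is \<open>b\<close> times
  the angle swept by the trajectory, a multiple of \<open>\<pi>\<close>. A continuous function of \<open>\<eta>\<close>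
  with values in \<open>\<pi>\<int>\<close> is locally constant, so the real part of \<open>\<phi>\<^sub>\<eta> = 0\<close> again forces
  \<open>x = \<plusminus>y = x\<^sup>t\<close>.
\<close>

lemmas has_vector_derivative_inner [derivative_intros] =
  bounded_bilinear.has_vector_derivative[OF bounded_bilinear_inner]

lemma has_real_derivative_inner_right:
  "(x has_vector_derivative x') F \<Longrightarrow> ((\<lambda>r. a \<bullet> x r) has_real_derivative a \<bullet> x') F"
  using bounded_linear.has_vector_derivative[OF bounded_linear_inner_right]
  by (simp add: has_real_derivative_iff_has_vector_derivative)

section \<open>The harmonic oscillator\<close>

text \<open>For \<open>\<omega> = 0\<close> division by zero makes this the constant \<open>x\<^sub>0\<close>, not the free motion.\<close>

definition harmonic :: "real \<Rightarrow> 'a::real_vector \<Rightarrow> 'a \<Rightarrow> real \<Rightarrow> 'a" where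
  "harmonic \<omega> x\<^sub>0 v\<^sub>0 s = cos (\<omega> * s) *\<^sub>R x\<^sub>0 + (sin (\<omega> * s) / \<omega>) *\<^sub>R v\<^sub>0"

lemma harmonic_0 [simp]: "harmonic \<omega> x\<^sub>0 v\<^sub>0 0 = x\<^sub>0"
  by (simp add: harmonic_def)

lemma harmonic_scaleR: "harmonic \<omega> (c *\<^sub>R x\<^sub>0) (c *\<^sub>R v\<^sub>0) s = c *\<^sub>R harmonic \<omega> x\<^sub>0 v\<^sub>0 s"
  by (simp add: harmonic_def algebra_simps)

lemma harmonic_add_right: "harmonic \<omega> x\<^sub>0 (v\<^sub>0 + w) s = harmonic \<omega> x\<^sub>0 v\<^sub>0 s + (sin (\<omega> * s) / \<omega>) *\<^sub>R w"
  by (simp add: harmonic_def scaleR_add_right)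

lemma harmonic_sin_eq_0: "sin (\<omega> * s) = 0 \<Longrightarrow> harmonic \<omega> x\<^sub>0 v\<^sub>0 s = cos (\<omega> * s) *\<^sub>R x\<^sub>0"
  by (simp add: harmonic_def)

lemma continuous_on_harmonic: "continuous_on S (harmonic \<omega> x\<^sub>0 (v\<^sub>0 :: 'a::real_normed_vector))"
  unfolding harmonic_def[abs_def] divide_inverse by (intro continuous_intros)

lemma has_vector_derivative_harmonic:
  assumes "\<omega> \<noteq> 0"
  shows "(harmonic \<omega> x\<^sub>0 v\<^sub>0 has_vector_derivative harmonic \<omega> v\<^sub>0 (- (\<omega>\<^sup>2) *\<^sub>R x\<^sub>0) s) (at s within S)"
  unfolding harmonic_def[abs_def] using assms
  by (auto intro!: derivative_eq_intros simp: power2_eq_square algebra_simps)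

lemma has_vector_derivative_harmonic_velocity:
  assumes "\<omega> \<noteq> 0"
  shows "(harmonic \<omega> v\<^sub>0 (- (\<omega>\<^sup>2) *\<^sub>R x\<^sub>0) has_vector_derivative - (\<omega>\<^sup>2) *\<^sub>R harmonic \<omega> x\<^sub>0 v\<^sub>0 s)
           (at s within S)"
  using has_vector_derivative_harmonic[OF assms, of v\<^sub>0 "- (\<omega>\<^sup>2) *\<^sub>R x\<^sub>0"]
  by (simp add: harmonic_scaleR[symmetric] flip: scaleR_scaleR)

lemma harmonic_unique:
  fixes x v :: "real \<Rightarrow> 'a::real_inner"
  assumes "\<omega> \<noteq> 0"
    and x': "\<And>s. s \<ge> 0 \<Longrightarrow> (x has_vector_derivative v s) (at s within {0..})"
    and v': "\<And>s. s \<ge> 0 \<Longrightarrow> (v has_vector_derivative - (\<omega>\<^sup>2) *\<^sub>R x s) (at s within {0..})"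
    and "s \<ge> 0"
  shows "x s = harmonic \<omega> (x 0) (v 0) s" and "v s = harmonic \<omega> (v 0) (- (\<omega>\<^sup>2) *\<^sub>R x 0) s"
proof -
  define dx where "dx r = x r - harmonic \<omega> (x 0) (v 0) r" for r
  define dv where "dv r = v r - harmonic \<omega> (v 0) (- (\<omega>\<^sup>2) *\<^sub>R x 0) r" for r
  have ddx: "(dx has_vector_derivative dv r) (at r within {0..})" if "r \<ge> 0" for r
    unfolding dx_def[abs_def] dv_def
    by (auto intro!: derivative_eq_intros x' that has_vector_derivative_harmonic assms(1))
  have ddv: "(dv has_vector_derivative - (\<omega>\<^sup>2) *\<^sub>R dx r) (at r within {0..})" if "r \<ge> 0" for r
    unfolding dv_def[abs_def] dx_def
    using has_vector_derivative_harmonic_velocity[OF assms(1), of "v 0" "x 0" r "{0..}"]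
    by (auto intro!: derivative_eq_intros v' that simp: algebra_simps)
  define E where "E r = dv r \<bullet> dv r + \<omega>\<^sup>2 * (dx r \<bullet> dx r)" for r
  have "(E has_vector_derivative 0) (at r within {0..})" if "r \<in> {0..}" for r
    unfolding E_def[abs_def] using that
    by (auto intro!: derivative_eq_intros ddx ddv simp: algebra_simps inner_commute)
  then obtain c where "\<forall>r\<in>{0..}. E r = c"
    using has_vector_derivative_zero_constant[OF convex_real_interval(1)] by blast
  then have "E s = E 0" using \<open>s \<ge> 0\<close> by simp
  also have "E 0 = 0" by (simp add: E_def dx_def dv_def)
  finally have "dx s = 0 \<and> dv s = 0"
    using \<open>\<omega> \<noteq> 0\<close> by (simp add: E_def add_nonneg_eq_0_iff)
  then show "x s = harmonic \<omega> (x 0) (v 0) s" and "v s = harmonic \<omega> (v 0) (- (\<omega>\<^sup>2) *\<^sub>R x 0) s"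
    by (simp_all add: dx_def dv_def)
qed

lemma integral_harmonic_lagrangian_sin_eq_0:
  fixes x\<^sub>0 v\<^sub>0 :: "'a::real_inner"
  assumes "\<omega> \<noteq> 0" and "0 \<le> t" and "sin (\<omega> * t) = 0"
  defines "x \<equiv> harmonic \<omega> x\<^sub>0 v\<^sub>0" and "p \<equiv> harmonic \<omega> v\<^sub>0 (- (\<omega>\<^sup>2) *\<^sub>R x\<^sub>0)"
  shows "integral {0..t} (\<lambda>s. (p s \<bullet> p s - \<omega>\<^sup>2 * (x s \<bullet> x s)) / 2) = 0"
proof -
  have "integral {0..t} (\<lambda>s. (p s \<bullet> p s - \<omega>\<^sup>2 * (x s \<bullet> x s)) / 2) = x t \<bullet> p t / 2 - x 0 \<bullet> p 0 / 2"
  proof (rule integral_unique, rule fundamental_theorem_of_calculus[OF \<open>0 \<le> t\<close>])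
    show "((\<lambda>s. (x s \<bullet> p s) / 2) has_vector_derivative (p s \<bullet> p s - \<omega>\<^sup>2 * (x s \<bullet> x s)) / 2)
        (at s within {0..t})" for s
      unfolding x_def p_def
      using has_vector_derivative_harmonic_velocity[OF assms(1), of v\<^sub>0 x\<^sub>0 s "{0..t}"]
      by (auto intro!: derivative_eq_intros has_vector_derivative_harmonic assms(1)
          simp: algebra_simps inner_commute)
  qed
  also have "x t \<bullet> p t = x 0 \<bullet> p 0"
    using assms(3) sin_cos_squared_add[of "\<omega> * t"]
    by (simp add: x_def p_def harmonic_sin_eq_0 power2_eq_square)
  finally show ?thesis
    by simp
qed

section \<open>Angle swept by a plane curve\<close>

definition perp :: "vec2 \<Rightarrow> vec2" where
  "perp z = (- snd z, fst z)"

lemma perp_inner: "perp u \<bullet> v = wedge u v"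
  by (simp add: perp_def wedge_def inner_prod_def)

lemma inner_perp: "u \<bullet> perp v = - wedge u v"
  by (simp add: perp_def wedge_def inner_prod_def)

lemma bounded_linear_perp: "bounded_linear perp"
  unfolding perp_def[abs_def]
  by (intro bounded_linear_Pair bounded_linear_minus bounded_linear_fst bounded_linear_snd)

lemma inner_self_scaleR_decompose: "(u \<bullet> u) *\<^sub>R v = (u \<bullet> v) *\<^sub>R u + wedge u v *\<^sub>R perp u"
  by (simp add: perp_def wedge_def inner_prod_def prod_eq_iff algebra_simps)

text \<open>\<open>cos \<theta> (perp a \<bullet> x) - sin \<theta> (a \<bullet> x)\<close> is the wedge of \<open>a\<close> with \<open>x\<close> rotated by \<open>-\<theta>\<close>.
  If \<open>\<theta>\<close> grows at the angular velocity of \<open>x\<close>, the rotated curve only moves radially.\<close>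

lemma has_real_derivative_rotated_wedge:
  fixes x :: "real \<Rightarrow> vec2"
  assumes x': "(x has_vector_derivative v) (at r within S)"
    and \<theta>': "(\<theta> has_real_derivative wedge (x r) v / (x r \<bullet> x r)) (at r within S)"
    and "x r \<noteq> 0"
  shows "((\<lambda>r. cos (\<theta> r) * (perp a \<bullet> x r) - sin (\<theta> r) * (a \<bullet> x r)) has_real_derivative
           (x r \<bullet> v) / (x r \<bullet> x r) * (cos (\<theta> r) * (perp a \<bullet> x r) - sin (\<theta> r) * (a \<bullet> x r)))
         (at r within S)"
proof -
  define N where "N = x r \<bullet> x r"
  have "N \<noteq> 0"
    using assms(3) by (simp add: N_def)
  have "N * (perp a \<bullet> v) = (x r \<bullet> v) * (perp a \<bullet> x r) + wedge (x r) v * (a \<bullet> x r)"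
    and "N * (a \<bullet> v) = (x r \<bullet> v) * (a \<bullet> x r) - wedge (x r) v * (perp a \<bullet> x r)"
    using arg_cong[OF inner_self_scaleR_decompose[of "x r" v], of "inner (perp a)"]
      arg_cong[OF inner_self_scaleR_decompose[of "x r" v], of "inner a"]
    by (simp_all add: N_def perp_def inner_prod_def algebra_simps)
  then have "- sin (\<theta> r) * (wedge (x r) v / N) * (perp a \<bullet> x r) + cos (\<theta> r) * (perp a \<bullet> v)
      - cos (\<theta> r) * (wedge (x r) v / N) * (a \<bullet> x r) - sin (\<theta> r) * (a \<bullet> v)
      = (x r \<bullet> v) / N * (cos (\<theta> r) * (perp a \<bullet> x r) - sin (\<theta> r) * (a \<bullet> x r))"
    using \<open>N \<noteq> 0\<close> by (simp add: field_simps) algebra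
  moreover have "((\<lambda>r. cos (\<theta> r) * (perp a \<bullet> x r) - sin (\<theta> r) * (a \<bullet> x r)) has_real_derivative
      - sin (\<theta> r) * (wedge (x r) v / N) * (perp a \<bullet> x r) + cos (\<theta> r) * (perp a \<bullet> v)
      - cos (\<theta> r) * (wedge (x r) v / N) * (a \<bullet> x r) - sin (\<theta> r) * (a \<bullet> v))
      (at r within S)"
    using \<theta>'[folded N_def]
    by (auto intro!: derivative_eq_intros x'[THEN has_real_derivative_inner_right])
  ultimately show ?thesis
    by (simp add: N_def)
qed

lemma sin_swept_angle_eq_0:
  fixes x x' :: "real \<Rightarrow> vec2"
  assumes "0 \<le> t"
    and x': "\<And>r. r \<in> {0..t} \<Longrightarrow> (x has_vector_derivative x' r) (at r within {0..t})"
    and nonzero: "\<And>r. r \<in> {0..t} \<Longrightarrow> x r \<noteq> 0"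
    and cont: "continuous_on {0..t} (\<lambda>r. wedge (x r) (x' r) / (norm (x r))\<^sup>2)"
    and "x t = c *\<^sub>R x 0" and "c \<noteq> 0"
  shows "sin (integral {0..t} (\<lambda>r. wedge (x r) (x' r) / (norm (x r))\<^sup>2)) = 0"
proof -
  define \<theta> where "\<theta> s = integral {0..s} (\<lambda>r. wedge (x r) (x' r) / (norm (x r))\<^sup>2)" for s
  define N where "N r = x r \<bullet> x r" for r
  define Z where "Z r = cos (\<theta> r) * (perp (x 0) \<bullet> x r) - sin (\<theta> r) * (x 0 \<bullet> x r)" for r
  have N_pos: "N r > 0" if "r \<in> {0..t}" for r
    using nonzero[OF that] by (simp add: N_def)
  have N': "(N has_real_derivative 2 * (x r \<bullet> x' r)) (at r within {0..t})" if "r \<in> {0..t}" for r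
    unfolding N_def[abs_def] has_real_derivative_iff_has_vector_derivative
    by (auto intro!: derivative_eq_intros x' that simp: inner_commute)
  have Z': "(Z has_real_derivative (x r \<bullet> x' r) / N r * Z r) (at r within {0..t})"
    if "r \<in> {0..t}" for r
    unfolding Z_def[abs_def] N_def
  proof (rule has_real_derivative_rotated_wedge[OF x'[OF that] _ nonzero[OF that]])
    show "(\<theta> has_real_derivative wedge (x r) (x' r) / (x r \<bullet> x r)) (at r within {0..t})"
      using integral_has_real_derivative[OF cont that] by (simp add: \<theta>_def[abs_def] power2_norm_eq_inner)
  qed
  define W where "W r = (Z r)\<^sup>2 / N r" for r
  have "(W has_real_derivative 0) (at r within {0..t})" if "r \<in> {0..t}" for r
    unfolding W_def[abs_def] using N_pos[OF that]
    by (auto intro!: derivative_eq_intros Z' N' that simp: field_simps power2_eq_square)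
  then obtain C where "\<forall>r\<in>{0..t}. W r = C"
    using has_field_derivative_zero_constant[OF convex_real_interval(5)] by blast
  then have "W t = W 0"
    using \<open>0 \<le> t\<close> by simp
  also have "W 0 = 0"
    by (simp add: W_def Z_def \<theta>_def perp_inner wedge_def)
  finally have "Z t = 0"
    using N_pos[of t] \<open>0 \<le> t\<close> by (simp add: W_def)
  moreover have "Z t = - c * (x 0 \<bullet> x 0) * sin (\<theta> t)"
    by (simp add: Z_def \<open>x t = c *\<^sub>R x 0\<close> perp_inner wedge_def)
  ultimately show ?thesis
    using nonzero[of 0] \<open>0 \<le> t\<close> \<open>c \<noteq> 0\<close> by (simp add: \<theta>_def)
qed

section \<open>The Aharonov--Bohm potential\<close>

lemma Apot_eq: "Apot b z = (b / (z \<bullet> z)) *\<^sub>R perp z"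
  by (simp add: Apot_def perp_def power2_norm_eq_inner)

lemma Apot_scaleR: "Apot b (c *\<^sub>R z) = inverse c *\<^sub>R Apot b z"
  by (cases "c = 0") (simp_all add: Apot_eq perp_def field_simps)

lemma wedge_Apot:
  assumes "y \<noteq> 0"
  shows "wedge y (Apot b y) = b"
proof -
  have "wedge y (Apot b y) = b / (y \<bullet> y) * wedge y (perp y)"
    by (simp add: Apot_eq wedge_def algebra_simps)
  also have "wedge y (perp y) = y \<bullet> y"
    by (simp add: wedge_def perp_def inner_prod_def)
  finally show ?thesis
    using assms by simp
qed

definition dApot :: "real \<Rightarrow> vec2 \<Rightarrow> vec2 \<Rightarrow> vec2" where
  "dApot b z w = (b / (z \<bullet> z)) *\<^sub>R perp w - (2 * b * (z \<bullet> w) / (z \<bullet> z)\<^sup>2) *\<^sub>R perp z"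

lemma has_derivative_Apot:
  assumes "z \<noteq> 0"
  shows "(Apot b has_derivative dApot b z) (at z)"
proof -
  have "(\<lambda>z. (b / (z \<bullet> z)) *\<^sub>R perp z) = Apot b" by (simp add: Apot_eq fun_eq_iff)
  moreover have "((\<lambda>z. (b / (z \<bullet> z)) *\<^sub>R perp z) has_derivative dApot b z) (at z)"
    using assms
    by (auto intro!: derivative_eq_intros bounded_linear.has_derivative[OF bounded_linear_perp]
        simp: dApot_def fun_eq_iff field_simps power2_eq_square inner_commute)
  ultimately show ?thesis by simp
qed

lemma dApot_symmetric: "u \<bullet> dApot b z w = dApot b z u \<bullet> w"
proof (cases "z = 0")
  case False
  have "perp u \<bullet> w = - (u \<bullet> perp w)"
    by (simp add: perp_def inner_prod_def)
  with False have "u \<bullet> dApot b z w - dApot b z u \<bullet> w =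
      2 * b / (z \<bullet> z)\<^sup>2 * ((z \<bullet> z) * (u \<bullet> perp w) - ((z \<bullet> w) * (u \<bullet> perp z) - (z \<bullet> u) * (perp z \<bullet> w)))"
    by (simp add: dApot_def inner_diff_right inner_diff_left field_simps power2_eq_square)
  also have "(z \<bullet> w) * (u \<bullet> perp z) - (z \<bullet> u) * (perp z \<bullet> w) = (z \<bullet> z) * (u \<bullet> perp w)"
    by (simp add: perp_def inner_prod_def algebra_simps)
  finally show ?thesis by simp
qed (simp add: dApot_def)

lemma has_derivative_ham:
  assumes "z \<noteq> 0"
  shows "((\<lambda>z. ham b \<omega> z \<xi>) has_derivative
           (\<lambda>w. \<omega>\<^sup>2 * (z \<bullet> w) - (\<xi> - Apot b z) \<bullet> dApot b z w)) (at z)"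
proof -
  have "(\<lambda>z. ham b \<omega> z \<xi>) = (\<lambda>z. (\<xi> - Apot b z) \<bullet> (\<xi> - Apot b z) / 2 + \<omega>\<^sup>2 / 2 * (z \<bullet> z))"
    by (simp add: ham_def power2_norm_eq_inner fun_eq_iff)
  moreover have "(\<dots> has_derivative (\<lambda>w. \<omega>\<^sup>2 * (z \<bullet> w) - (\<xi> - Apot b z) \<bullet> dApot b z w)) (at z)"
    by (auto intro!: derivative_eq_intros has_derivative_Apot assms
        simp: fun_eq_iff inner_diff_left inner_commute field_simps)
  ultimately show ?thesis by simp
qed

lemma lagrangian_eq:
  "p \<bullet> (p + Apot b x) - ham b \<omega> x (p + Apot b x) =
     (p \<bullet> p - \<omega>\<^sup>2 * (x \<bullet> x)) / 2 + b * (wedge x p / (norm x)\<^sup>2)"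
proof -
  have "p \<bullet> Apot b x = b * (wedge x p / (norm x)\<^sup>2)"
    by (simp add: Apot_eq inner_perp power2_norm_eq_inner wedge_def)
  then show ?thesis
    by (simp add: ham_def power2_norm_eq_inner inner_add_right field_simps)
qed

section \<open>The flow and the action\<close>

lemma is_flow_derivatives:
  assumes "is_flow b \<omega> X \<Xi>" and "y \<noteq> 0" and "wedge y \<eta> \<noteq> b" and "s \<ge> 0"
  shows "((\<lambda>r. X r y \<eta>) has_vector_derivative \<Xi> s y \<eta> - Apot b (X s y \<eta>)) (at s within {0..})"
    and "((\<lambda>r. \<Xi> r y \<eta> - Apot b (X r y \<eta>)) has_vector_derivative - (\<omega>\<^sup>2) *\<^sub>R X s y \<eta>)
           (at s within {0..})"
proof -
  define x where "x = X s y \<eta>"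
  define p where "p = \<Xi> s y \<eta> - Apot b x"
  have x0: "x \<noteq> 0"
    and x': "((\<lambda>r. X r y \<eta>) has_vector_derivative p) (at s within {0..})"
    using assms unfolding is_flow_def x_def p_def by blast+
  then show "((\<lambda>r. X r y \<eta>) has_vector_derivative \<Xi> s y \<eta> - Apot b (X s y \<eta>)) (at s within {0..})"
    by (simp add: p_def x_def)
  obtain v where \<xi>': "((\<lambda>r. \<Xi> r y \<eta>) has_vector_derivative v) (at s within {0..})"
    and grad: "((\<lambda>z. ham b \<omega> z (\<Xi> s y \<eta>)) has_derivative (\<lambda>w. - (v \<bullet> w))) (at x)"
    using assms unfolding is_flow_def x_def by blast
  have "(\<lambda>w. - (v \<bullet> w)) = (\<lambda>w. \<omega>\<^sup>2 * (x \<bullet> w) - p \<bullet> dApot b x w)"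
    using has_derivative_unique[OF grad has_derivative_ham[OF x0]] by (simp add: p_def)
  then have v: "v \<bullet> w = p \<bullet> dApot b x w - \<omega>\<^sup>2 * (x \<bullet> w)" for w
    by (metis add.inverse_inverse minus_diff_eq)
  have "((\<lambda>r. Apot b (X r y \<eta>)) has_vector_derivative dApot b x p) (at s within {0..})"
    using vector_derivative_diff_chain_within[OF x', of "Apot b" "dApot b x"] has_derivative_Apot[OF x0]
    by (simp add: o_def x_def has_derivative_at_withinI)
  then have "((\<lambda>r. \<Xi> r y \<eta> - Apot b (X r y \<eta>)) has_vector_derivative v - dApot b x p) (at s within {0..})"
    by (intro derivative_intros \<xi>')
  moreover have "v - dApot b x p = - (\<omega>\<^sup>2) *\<^sub>R x"
  proof -
    have "(v - dApot b x p) \<bullet> w = (- (\<omega>\<^sup>2) *\<^sub>R x) \<bullet> w" for w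
      using v[of w] dApot_symmetric[of p b x w] by (simp add: inner_diff_left)
    then show ?thesis
      using vector_eq_rdot by blast
  qed
  ultimately show "((\<lambda>r. \<Xi> r y \<eta> - Apot b (X r y \<eta>)) has_vector_derivative - (\<omega>\<^sup>2) *\<^sub>R X s y \<eta>)
      (at s within {0..})"
    by (simp add: x_def)
qed

lemma is_flow_eq_harmonic:
  assumes "\<omega> \<noteq> 0" and "is_flow b \<omega> X \<Xi>" and "y \<noteq> 0" and "wedge y \<eta> \<noteq> b" and "s \<ge> 0"
  shows "X s y \<eta> = harmonic \<omega> y (\<eta> - Apot b y) s"
    and "\<Xi> s y \<eta> = harmonic \<omega> (\<eta> - Apot b y) (- (\<omega>\<^sup>2) *\<^sub>R y) s + Apot b (X s y \<eta>)"
proof -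
  have init: "X 0 y \<eta> = y" "\<Xi> 0 y \<eta> = \<eta>"
    using assms(2-4) unfolding is_flow_def by blast+
  note harmonic = harmonic_unique[OF assms(1) is_flow_derivatives[OF assms(2-4)] assms(5)]
  show "X s y \<eta> = harmonic \<omega> y (\<eta> - Apot b y) s"
    using harmonic(1) by (simp add: init)
  show "\<Xi> s y \<eta> = harmonic \<omega> (\<eta> - Apot b y) (- (\<omega>\<^sup>2) *\<^sub>R y) s + Apot b (X s y \<eta>)"
    using harmonic(2) by (simp add: init algebra_simps)
qed

lemma is_flow_sin_eq_0:
  assumes "\<omega> \<noteq> 0" and "is_flow b \<omega> X \<Xi>" and "y \<noteq> 0" and "wedge y \<eta> \<noteq> b"
    and "0 \<le> t" and "sin (\<omega> * t) = 0"
  shows "X t y \<eta> = cos (\<omega> * t) *\<^sub>R y" and "\<Xi> t y \<eta> = cos (\<omega> * t) *\<^sub>R \<eta>"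
proof -
  define c where "c = cos (\<omega> * t)"
  have "c * c = 1"
    using assms(6) sin_cos_squared_add[of "\<omega> * t"] by (simp add: c_def power2_eq_square)
  then have c_inv: "inverse c = c"
    by (rule inverse_unique)
  note harmonic = is_flow_eq_harmonic[OF assms(1-5)]
  show X: "X t y \<eta> = cos (\<omega> * t) *\<^sub>R y"
    using harmonic(1) assms(6) by (simp add: harmonic_sin_eq_0)
  have "\<Xi> t y \<eta> = c *\<^sub>R (\<eta> - Apot b y) + Apot b (c *\<^sub>R y)"
    unfolding harmonic(2) X harmonic_sin_eq_0[OF assms(6)] c_def ..
  also have "\<dots> = c *\<^sub>R \<eta>"
    by (simp add: Apot_scaleR c_inv scaleR_diff_right)
  finally show "\<Xi> t y \<eta> = cos (\<omega> * t) *\<^sub>R \<eta>"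
    by (simp add: c_def)
qed

lemma action_sin_eq_0:
  assumes "\<omega> \<noteq> 0" and flow: "is_flow b \<omega> X \<Xi>" and "y \<noteq> 0" and "wedge y \<eta> \<noteq> b"
    and "0 \<le> t" and "sin (\<omega> * t) = 0"
  shows "\<exists>\<theta>. sin \<theta> = 0 \<and> action b \<omega> X \<Xi> t y \<eta> = b * \<theta>"
proof -
  define q where "q = \<eta> - Apot b y"
  define x where "x = harmonic \<omega> y q"
  define p where "p = harmonic \<omega> q (- (\<omega>\<^sup>2) *\<^sub>R y)"
  define L where "L s = wedge (x s) (p s) / (norm (x s))\<^sup>2" for s
  have X: "X s y \<eta> = x s" and \<Xi>: "\<Xi> s y \<eta> = p s + Apot b (x s)" if "s \<ge> 0" for s
    using is_flow_eq_harmonic[OF assms(1-4) that] by (simp_all add: x_def p_def q_def)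
  have x_nonzero: "x s \<noteq> 0" if "s \<ge> 0" for s
    using flow assms(3,4) that X[OF that] unfolding is_flow_def by metis
  have x': "(x has_vector_derivative p s) (at s within S)" for s S
    unfolding x_def p_def by (rule has_vector_derivative_harmonic[OF assms(1)])
  have cont_x: "continuous_on S x" and cont_p: "continuous_on S p" for S
    unfolding x_def p_def by (rule continuous_on_harmonic)+
  have cont_L: "continuous_on {0..t} L"
    unfolding L_def wedge_def using x_nonzero
    by (intro continuous_intros cont_x cont_p) auto
  have "action b \<omega> X \<Xi> t y \<eta> = integral {0..t} (\<lambda>s. (p s \<bullet> p s - \<omega>\<^sup>2 * (x s \<bullet> x s)) / 2 + b * L s)"
    unfolding action_def by (intro integral_cong) (simp add: X \<Xi> lagrangian_eq L_def)
  also have "\<dots> = integral {0..t} (\<lambda>s. (p s \<bullet> p s - \<omega>\<^sup>2 * (x s \<bullet> x s)) / 2) + b * integral {0..t} L"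
  proof (subst integral_add)
    show "(\<lambda>s. (p s \<bullet> p s - \<omega>\<^sup>2 * (x s \<bullet> x s)) / 2) integrable_on {0..t}"
      by (intro integrable_continuous_interval continuous_intros cont_x cont_p) simp
    show "(\<lambda>s. b * L s) integrable_on {0..t}"
      using cont_L by (intro integrable_continuous_interval continuous_intros)
  qed simp
  also have "integral {0..t} (\<lambda>s. (p s \<bullet> p s - \<omega>\<^sup>2 * (x s \<bullet> x s)) / 2) = 0"
    unfolding x_def p_def by (rule integral_harmonic_lagrangian_sin_eq_0[OF assms(1,5,6)])
  finally have "action b \<omega> X \<Xi> t y \<eta> = b * integral {0..t} L"
    by simp
  moreover have "sin (integral {0..t} L) = 0"
    unfolding L_def
  proof (rule sin_swept_angle_eq_0[OF \<open>0 \<le> t\<close> has_vector_derivative_at_within[OF x']])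
    show "x r \<noteq> 0" if "r \<in> {0..t}" for r
      using x_nonzero that by simp
    show "continuous_on {0..t} (\<lambda>r. wedge (x r) (p r) / (norm (x r))\<^sup>2)"
      using cont_L by (simp add: L_def)
    show "x t = cos (\<omega> * t) *\<^sub>R x 0"
      using \<open>sin (\<omega> * t) = 0\<close> by (simp add: x_def harmonic_sin_eq_0)
    show "cos (\<omega> * t) \<noteq> 0"
      using \<open>sin (\<omega> * t) = 0\<close> sin_cos_squared_add[of "\<omega> * t"] by auto
  qed
  ultimately show ?thesis
    by blast
qed

section \<open>Critical points of the phase\<close>

lemma sin_eq_0_locally_constant:
  fixes f :: "'a::t2_space \<Rightarrow> real"
  assumes "isCont f a" and sin_f: "eventually (\<lambda>x. sin (f x) = 0) (nhds a)"
  shows "eventually (\<lambda>x. f x = f a) (nhds a)"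
proof -
  obtain j :: int where j: "f a = j * pi"
    using eventually_nhds_x_imp_x[OF sin_f] sin_zero_iff_int2 by blast
  have "(f \<longlongrightarrow> f a) (nhds a)"
    using assms(1) by (simp add: isCont_def tendsto_nhds_iff)
  then have "eventually (\<lambda>x. dist (f x) (f a) < pi) (nhds a)"
    by (rule tendstoD) simp
  then show ?thesis
    using sin_f
  proof eventually_elim
    case (elim x)
    then obtain i :: int where i: "f x = i * pi"
      using sin_zero_iff_int2 by blast
    with j elim(1) have "\<bar>real_of_int i - j\<bar> * pi < 1 * pi"
      by (simp add: dist_real_def left_diff_distrib[symmetric] abs_mult)
    then have "\<bar>real_of_int i - j\<bar> < 1"
      by (rule mult_right_less_imp_less) simp
    then have "i = j"
      by linarith
    with i j show ?case by simp
  qed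
qed

lemma DERIV_eventually_affine_mod_pi:
  assumes g': "(g has_real_derivative D) (at 0)"
    and g: "eventually (\<lambda>h. \<exists>\<theta>. sin \<theta> = 0 \<and> g h = b * \<theta> + a + k * h) (nhds 0)"
  shows "D = k"
proof -
  have "eventually (\<lambda>h. g h - k * h = g 0) (nhds 0)"
  proof (cases "b = 0")
    case True
    have "eventually (\<lambda>h. g h - k * h = a) (nhds 0)"
      using g by (rule eventually_mono) (auto simp: True)
    moreover from this have "g 0 - k * 0 = a"
      by (rule eventually_nhds_x_imp_x)
    ultimately show ?thesis by simp
  next
    case False
    define \<theta> where "\<theta> h = (g h - a - k * h) / b" for h
    have "isCont \<theta> 0"
      unfolding \<theta>_def[abs_def] using DERIV_isCont[OF g'] False by (intro continuous_intros)
    moreover have "eventually (\<lambda>h. sin (\<theta> h) = 0) (nhds 0)"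
      using g by (rule eventually_mono) (auto simp: \<theta>_def False)
    ultimately have "eventually (\<lambda>h. \<theta> h = \<theta> 0) (nhds 0)"
      by (rule sin_eq_0_locally_constant)
    then show ?thesis
      by (rule eventually_mono) (simp add: \<theta>_def False)
  qed
  then have g_eq: "eventually (\<lambda>h. g h = g 0 + k * h) (nhds 0)"
    by (rule eventually_mono) simp
  have "((\<lambda>h. g 0 + k * h) has_real_derivative D) (at 0)"
    using g' unfolding DERIV_cong_ev[OF refl g_eq refl] .
  moreover have "((\<lambda>h. g 0 + k * h) has_real_derivative k) (at 0)"
    by (auto intro!: derivative_eq_intros)
  ultimately show ?thesis
    using DERIV_unique by blast
qed

lemma eventually_wedge_ne:
  assumes "wedge y \<eta> \<noteq> b"
  shows "eventually (\<lambda>h. wedge y (\<eta> + h *\<^sub>R e) \<noteq> b) (nhds 0)"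
proof -
  have "((\<lambda>h. wedge y (\<eta> + h *\<^sub>R e)) \<longlongrightarrow> wedge y \<eta>) (at 0)"
    unfolding wedge_def by (auto intro!: tendsto_eq_intros)
  then have "eventually (\<lambda>h. wedge y (\<eta> + h *\<^sub>R e) \<noteq> b) (at 0)"
    using assms by (rule tendsto_imp_eventually_ne)
  then show ?thesis
    using assms by (simp add: eventually_nhds_conv_at)
qed

lemma Im_phase_critical:
  assumes "\<omega> \<noteq> 0" and "B \<noteq> 0" and flow: "is_flow b \<omega> X \<Xi>" and "y \<noteq> 0" and "wedge y \<eta> \<noteq> b"
    and "0 \<le> t"
    and D: "((\<lambda>h. Im (phase b \<omega> B X \<Xi> t x y (\<eta> + h *\<^sub>R e))) has_real_derivative 0) (at 0)"
  shows "sin (\<omega> * t) * ((x - X t y \<eta>) \<bullet> e) = 0"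
proof -
  define \<kappa> where "\<kappa> = sin (\<omega> * t) / \<omega>"
  define d where "d h = x - X t y \<eta> - (h * \<kappa>) *\<^sub>R e" for h
  have Im_eq: "eventually (\<lambda>h. Im (phase b \<omega> B X \<Xi> t x y (\<eta> + h *\<^sub>R e)) = B / 2 * (d h \<bullet> d h)) (nhds 0)"
    using eventually_wedge_ne[OF assms(5)]
  proof (rule eventually_mono)
    fix h
    assume "wedge y (\<eta> + h *\<^sub>R e) \<noteq> b"
    then have "X t y (\<eta> + h *\<^sub>R e) = harmonic \<omega> y ((\<eta> - Apot b y) + h *\<^sub>R e) t"
      using is_flow_eq_harmonic(1)[OF assms(1) flow assms(4) _ assms(6)] by (simp add: algebra_simps)
    also have "\<dots> = X t y \<eta> + (h * \<kappa>) *\<^sub>R e"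
      using is_flow_eq_harmonic(1)[OF assms(1) flow assms(4,5,6)] by (simp add: harmonic_add_right \<kappa>_def)
    finally have "x - X t y (\<eta> + h *\<^sub>R e) = d h"
      by (simp add: d_def algebra_simps)
    then show "Im (phase b \<omega> B X \<Xi> t x y (\<eta> + h *\<^sub>R e)) = B / 2 * (d h \<bullet> d h)"
      by (simp add: phase_def power2_norm_eq_inner)
  qed
  have "((\<lambda>h. B / 2 * (d h \<bullet> d h)) has_real_derivative 0) (at 0)"
    using D unfolding DERIV_cong_ev[OF refl Im_eq refl] .
  moreover have "(d has_vector_derivative - \<kappa> *\<^sub>R e) (at 0)"
    unfolding d_def[abs_def] by (auto intro!: derivative_eq_intros)
  then have "((\<lambda>h. B / 2 * (d h \<bullet> d h)) has_real_derivative - B * \<kappa> * (d 0 \<bullet> e)) (at 0)"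
    unfolding has_real_derivative_iff_has_vector_derivative
    by (auto intro!: derivative_eq_intros simp: inner_commute)
  ultimately have "B * \<kappa> * (d 0 \<bullet> e) = 0"
    using DERIV_unique by fastforce
  then show ?thesis
    using assms(1,2) by (simp add: \<kappa>_def d_def)
qed

lemma Re_phase_critical:
  assumes "\<omega> \<noteq> 0" and flow: "is_flow b \<omega> X \<Xi>" and "y \<noteq> 0" and "wedge y \<eta> \<noteq> b"
    and "0 \<le> t" and "sin (\<omega> * t) = 0"
    and D: "((\<lambda>h. Re (phase b \<omega> B X \<Xi> t x y (\<eta> + h *\<^sub>R e))) has_real_derivative 0) (at 0)"
  shows "(x - cos (\<omega> * t) *\<^sub>R y) \<bullet> e = 0"
proof -
  define c where "c = cos (\<omega> * t)"
  have "c \<noteq> 0"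
    using assms(6) sin_cos_squared_add[of "\<omega> * t"] by (auto simp: c_def)
  have "eventually (\<lambda>h. \<exists>\<theta>. sin \<theta> = 0 \<and> Re (phase b \<omega> B X \<Xi> t x y (\<eta> + h *\<^sub>R e)) =
      b * \<theta> + c * ((x - c *\<^sub>R y) \<bullet> \<eta>) + c * ((x - c *\<^sub>R y) \<bullet> e) * h) (nhds 0)"
    using eventually_wedge_ne[OF assms(4)]
  proof (rule eventually_mono)
    fix h
    assume w: "wedge y (\<eta> + h *\<^sub>R e) \<noteq> b"
    obtain \<theta> where "sin \<theta> = 0" and "action b \<omega> X \<Xi> t y (\<eta> + h *\<^sub>R e) = b * \<theta>"
      using action_sin_eq_0[OF assms(1) flow assms(3) w assms(5,6)] by blast
    with is_flow_sin_eq_0[OF assms(1) flow assms(3) w assms(5,6)]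
    show "\<exists>\<theta>. sin \<theta> = 0 \<and> Re (phase b \<omega> B X \<Xi> t x y (\<eta> + h *\<^sub>R e)) =
        b * \<theta> + c * ((x - c *\<^sub>R y) \<bullet> \<eta>) + c * ((x - c *\<^sub>R y) \<bullet> e) * h"
      by (auto simp: phase_def c_def algebra_simps)
  qed
  then have "0 = c * ((x - c *\<^sub>R y) \<bullet> e)"
    by (rule DERIV_eventually_affine_mod_pi[OF D])
  with \<open>c \<noteq> 0\<close> show ?thesis
    by (simp add: c_def)
qed

lemma phase_critical_direction:
  assumes "\<omega> \<noteq> 0" and "B \<noteq> 0" and flow: "is_flow b \<omega> X \<Xi>" and "y \<noteq> 0" and "wedge y \<eta> \<noteq> b"
    and "0 \<le> t"
    and D: "((\<lambda>h. phase b \<omega> B X \<Xi> t x y (\<eta> + h *\<^sub>R e)) has_vector_derivative 0) (at 0)"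
  shows "(x - X t y \<eta>) \<bullet> e = 0"
proof (cases "sin (\<omega> * t) = 0")
  case True
  have "((\<lambda>h. Re (phase b \<omega> B X \<Xi> t x y (\<eta> + h *\<^sub>R e))) has_real_derivative 0) (at 0)"
    using bounded_linear.has_vector_derivative[OF bounded_linear_Re D]
    by (simp add: has_real_derivative_iff_has_vector_derivative)
  with Re_phase_critical[OF assms(1,3-6) True] show ?thesis
    using is_flow_sin_eq_0(1)[OF assms(1,3-6) True] by simp
next
  case False
  have "((\<lambda>h. Im (phase b \<omega> B X \<Xi> t x y (\<eta> + h *\<^sub>R e))) has_real_derivative 0) (at 0)"
    using bounded_linear.has_vector_derivative[OF bounded_linear_Im D]
    by (simp add: has_real_derivative_iff_has_vector_derivative)
  with Im_phase_critical[OF assms(1-6)] False show ?thesis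
    by simp
qed

lemma phase_eta_zero_imp_eq_flow:
  assumes "\<omega> \<noteq> 0" and "B \<noteq> 0" and "is_flow b \<omega> X \<Xi>" and "y \<noteq> 0" and "wedge y \<eta> \<noteq> b"
    and "0 \<le> t" and "phase_eta_zero b \<omega> B X \<Xi> t x y \<eta>"
  shows "x = X t y \<eta>"
proof -
  have "(x - X t y \<eta>) \<bullet> (1, 0) = 0" and "(x - X t y \<eta>) \<bullet> (0, 1) = 0"
    using assms(7) unfolding phase_eta_zero_def
    by (auto intro!: phase_critical_direction[OF assms(1-6)])
  then show ?thesis
    by (simp add: prod_eq_iff inner_prod_def)
qed

theorem proposition3p4:
  fixes b \<omega> B t :: real
    and X \<Xi> :: "real \<Rightarrow> vec2 \<Rightarrow> vec2 \<Rightarrow> vec2"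
  assumes "\<omega> > 0" and "B > 0" and "t \<ge> 0"
    and "is_flow b \<omega> X \<Xi>"
  shows "{(x, y, \<eta>). y \<noteq> 0 \<and> wedge y \<eta> \<noteq> b \<and> phase_eta_zero b \<omega> B X \<Xi> t x y \<eta>}
         \<subseteq> {(x, y, \<eta>). wedge x y = - (sin (\<omega> * t) / \<omega>) * (wedge y \<eta> - b)}"
proof clarify
  fix x y \<eta>
  assume "y \<noteq> 0" and "wedge y \<eta> \<noteq> b" and "phase_eta_zero b \<omega> B X \<Xi> t x y \<eta>"
  moreover have "\<omega> \<noteq> 0" and "B \<noteq> 0"
    using assms(1,2) by simp_all
  ultimately have x: "x = harmonic \<omega> y (\<eta> - Apot b y) t"
    using phase_eta_zero_imp_eq_flow is_flow_eq_harmonic(1) assms(3,4) by metis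
  have "wedge x y = - (sin (\<omega> * t) / \<omega>) * wedge y (\<eta> - Apot b y)"
    unfolding x by (simp add: harmonic_def wedge_def algebra_simps)
  also have "wedge y (\<eta> - Apot b y) = wedge y \<eta> - b"
    using wedge_Apot[OF \<open>y \<noteq> 0\<close>] by (simp add: wedge_def algebra_simps)
  finally show "wedge x y = - (sin (\<omega> * t) / \<omega>) * (wedge y \<eta> - b)" .
qed

end
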